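(* For every $\eta\ge0$ define \[ L_{\Phi,\eta}:=\max_{\pi\in\Theta}\|M_\pi+\eta I\|_2. \] Then \[ \rho^{\mathrm{dir}}_{\alpha,\eta}\le\sqrt{1-2\alpha(c_\Phi+\eta)+\alpha^2L_{\Phi,\eta}^2}. \] Since $L_{\Phi,\eta}\le L_\Phi+\eta$, also \[ \rho^{\mathrm{dir}}_{\alpha,\eta}\le\sqrt{1-2\alpha(c_\Phi+\eta)+\alpha^2(L_\Phi+\eta)^2}. \] Hence, if $c_\Phi+\eta>0$ and $0<\alpha<2(c_\Phi+\eta)/L_{\Phi,\eta}^2$, then $\rho^{\mathrm{dir}}_{\alpha,\eta}<1$. The same conclusion holds if $c_\Phi+\eta>0$ and $0<\alpha<2(c_\Phi+\eta)/(L_\Phi+\eta)^2$.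
   Context: Consider a finite discounted MDP with state space $\mathcal S=\{1,\dots,|\mathcal S|\}$, action space $\mathcal A=\{1,\dots,|\mathcal A|\}$, transition probabilities $P(s'\mid s,a)$, and discount factor $\gamma\in(0,1)$. State-action vectors are ordered as $(1,1),(2,1),\dots,(|\mathcal S|,1),(1,2),\dots$. The matrix $P\in\mathbb R^{|\mathcal S||\mathcal A|\times|\mathcal S|}$ has rows $P(\cdot\mid s,a)$. The set $\Theta$ is the finite set of deterministic stationary policies $\pi:\mathcal S\to\mathcal A$. For $\pi\in\Theta$, $\Pi^\pi$ has entry $1$ at row $s$, column $(s,\pi(s))$, and zeros elsewhere. The feature matrix $\Phi\in\mathbb R^{|\mathcal S||\mathcal A|\times m}$ has full column rank. The distribution $d>0$ on $\mathcal S\times\mathcal A$ gives $D=\mathrm{diag}(d)$. The step size is $\alpha\in(0,1)$ and the regularization weight is $\eta\ge0$. Let $M_\pi:=\Phi^\top D\Phi-\gamma\Phi^\top DP\Pi^\pi\Phi$. Define \[ c_\Phi:=\min_{\pi\in\Theta}\lambda_{\min}\big((M_\pi+M_\pi^\top)/2\big),\qquad L_\Phi:=\max_{\pi\in\Theta}\|M_\pi\|_2. \] For $\pi\in\Theta$, define $A^\eta_\pi:=I-\alpha(M_\pi+\eta I)$, and let $\rho^{\mathrm{dir}}_{\alpha,\eta}$ be the joint spectral radius $\lim_k\max_{\pi_i\in\Theta}\|A^\eta_{\pi_k}\cdots A^\eta_{\pi_1}\|^{1/k}$ of $\{A^\eta_\pi:\pi\in\Theta\}$. *)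

theory Defs
  imports "HOL-Analysis.Analysis"
begin

text \<open>State-action pairs are indexed by the product type 's \<times> 'a; features by the finite type 'm.
 Matrices are HOL-Analysis matrices real^'cols^'rows.\<close>

definition diag_mat :: "real^'n \<Rightarrow> real^'n^'n" where
  "diag_mat d = (\<chi> i j. if i = j then d $ i else 0)"

definition Pi_mat :: "('s::finite \<Rightarrow> 'a::finite) \<Rightarrow> real^('s \<times> 'a)^'s" where
  "Pi_mat \<pi> = (\<chi> s sa. if sa = (s, \<pi> s) then 1 else 0)"

definition M_mat :: "real \<Rightarrow> real^'s^('s::finite \<times> 'a::finite) \<Rightarrow> real^('s \<times> 'a) \<Rightarrow> real^'m^('s \<times> 'a)
    \<Rightarrow> ('s \<Rightarrow> 'a) \<Rightarrow> real^'m::finite^'m" where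
  "M_mat \<gamma> P d \<Phi> \<pi> =
     transpose \<Phi> ** diag_mat d ** \<Phi> - \<gamma> *\<^sub>R (transpose \<Phi> ** diag_mat d ** P ** Pi_mat \<pi> ** \<Phi>)"

definition opnorm2 :: "real^'n::finite^'m::finite \<Rightarrow> real" where
  "opnorm2 A = onorm (\<lambda>x. A *v x)"

text \<open>Smallest (real) eigenvalue; used for symmetric matrices, whose eigenvalues are all real.\<close>
definition lambda_min :: "real^'n::finite^'n \<Rightarrow> real" where
  "lambda_min A = Min {c. \<exists>v. v \<noteq> 0 \<and> A *v v = c *\<^sub>R v}"

definition c_Phi :: "real \<Rightarrow> real^'s^('s::finite \<times> 'a::finite) \<Rightarrow> real^('s \<times> 'a) \<Rightarrow> real^'m::finite^('s \<times> 'a) \<Rightarrow> real" where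
  "c_Phi \<gamma> P d \<Phi> = Min (range (\<lambda>\<pi>. lambda_min ((1/2) *\<^sub>R (M_mat \<gamma> P d \<Phi> \<pi> + transpose (M_mat \<gamma> P d \<Phi> \<pi>)))))"

definition L_Phi :: "real \<Rightarrow> real^'s^('s::finite \<times> 'a::finite) \<Rightarrow> real^('s \<times> 'a) \<Rightarrow> real^'m::finite^('s \<times> 'a) \<Rightarrow> real" where
  "L_Phi \<gamma> P d \<Phi> = Max (range (\<lambda>\<pi>. opnorm2 (M_mat \<gamma> P d \<Phi> \<pi>)))"

definition L_Phi_eta :: "real \<Rightarrow> real^'s^('s::finite \<times> 'a::finite) \<Rightarrow> real^('s \<times> 'a) \<Rightarrow> real^'m::finite^('s \<times> 'a) \<Rightarrow> real \<Rightarrow> real" where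
  "L_Phi_eta \<gamma> P d \<Phi> \<eta> = Max (range (\<lambda>\<pi>. opnorm2 (M_mat \<gamma> P d \<Phi> \<pi> + \<eta> *\<^sub>R mat 1)))"

definition A_mat :: "real \<Rightarrow> real^'s^('s::finite \<times> 'a::finite) \<Rightarrow> real^('s \<times> 'a) \<Rightarrow> real^'m::finite^('s \<times> 'a)
    \<Rightarrow> real \<Rightarrow> real \<Rightarrow> ('s \<Rightarrow> 'a) \<Rightarrow> real^'m^'m" where
  "A_mat \<gamma> P d \<Phi> \<alpha> \<eta> \<pi> = mat 1 - \<alpha> *\<^sub>R (M_mat \<gamma> P d \<Phi> \<pi> + \<eta> *\<^sub>R mat 1)"

fun matprod_list :: "('i \<Rightarrow> real^'n::finite^'n) \<Rightarrow> 'i list \<Rightarrow> real^'n^'n" where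
  "matprod_list A [] = mat 1"
| "matprod_list A (i # is) = A i ** matprod_list A is"

definition jsr :: "('i::finite \<Rightarrow> real^'n::finite^'n) \<Rightarrow> real" where
  "jsr A = lim (\<lambda>k. (Max {opnorm2 (matprod_list A is) | is. length is = Suc k}) powr (1 / real (Suc k)))"

end

(*
  For every policy the quadratic form of M\<^sub>\<pi> + \<eta>I is at least (c\<^sub>\<Phi> + \<eta>)|x|^2, by the Rayleigh
  quotient of its symmetric part, and its spectral norm is at most L\<^sub>\<Phi>\<^sub>,\<^sub>\<eta>. Expanding
  |x - \<alpha>(M\<^sub>\<pi> + \<eta>I)x|^2 therefore bounds every A\<^sub>\<pi> uniformly by
  q = sqrt (1 - 2\<alpha>(c\<^sub>\<Phi> + \<eta>) + \<alpha>^2 L\<^sub>\<Phi>\<^sub>,\<^sub>\<eta>^2), hence every product of k factors by q^k, and the joint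
  spectral radius by q. The limit defining the joint spectral radius exists by Fekete's lemma,
  since the maximal norm of k-fold products is submultiplicative in k.
*)

theory Submission
  imports Defs
begin

section \<open>Fekete's lemma for submultiplicative sequences\<close>

lemma root_power_powr:
  fixes x :: real
  assumes "0 \<le> x" "0 < n"
  shows "(x ^ n) powr (1 / real n) = x"
  using assms by (cases "x = 0") (simp_all add: powr_realpow[symmetric] powr_powr)

lemma submultiplicative_le_power:
  fixes b :: "nat \<Rightarrow> real"
  assumes nonneg: "\<And>n. 0 \<le> b n" and submult: "\<And>m n. b (m + n) \<le> b m * b n"
  shows "b (q * m + j) \<le> b m ^ q * b j"
proof (induction q)
  case (Suc q)
  have "b (Suc q * m + j) = b (m + (q * m + j))" by (simp add: add.assoc)
  also have "\<dots> \<le> b m * b (q * m + j)" by (rule submult)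
  also have "\<dots> \<le> b m * (b m ^ q * b j)" using Suc nonneg by (intro mult_left_mono) auto
  finally show ?case by (simp add: mult.assoc)
qed simp

lemma submultiplicative_le_root_power:
  fixes b :: "nat \<Rightarrow> real"
  assumes nonneg: "\<And>n. 0 \<le> b n" and submult: "\<And>m n. b (m + n) \<le> b m * b n"
    and "0 < m" "0 < b m"
  shows "\<exists>K>0. \<forall>n. b n \<le> (b m powr (1 / real m)) ^ n * K"
proof -
  define \<beta> where "\<beta> = b m powr (1 / real m)"
  have \<beta>_pos: "0 < \<beta>" using \<open>0 < b m\<close> by (simp add: \<beta>_def)
  have \<beta>_power: "\<beta> ^ m = b m"
    using \<open>0 < m\<close> \<open>0 < b m\<close> by (simp add: \<beta>_def powr_realpow[symmetric] powr_powr)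
  define K where "K = (\<Sum>j<m. b j / \<beta> ^ j) + 1"
  have K_ge: "b j / \<beta> ^ j \<le> K" if "j < m" for j
  proof -
    have "b j / \<beta> ^ j \<le> (\<Sum>j<m. b j / \<beta> ^ j)"
      using that nonneg \<beta>_pos by (intro member_le_sum) auto
    then show ?thesis by (simp add: K_def)
  qed
  have "0 < K"
    unfolding K_def using nonneg \<beta>_pos by (simp add: add_nonneg_pos sum_nonneg)
  moreover have "b n \<le> \<beta> ^ n * K" for n
  proof -
    define q j where "q = n div m" and "j = n mod m"
    have n_eq: "n = q * m + j" by (simp add: q_def j_def)
    have "j < m" using \<open>0 < m\<close> by (simp add: j_def)
    have "b n \<le> b m ^ q * b j"
      unfolding n_eq by (rule submultiplicative_le_power[where b = b, OF nonneg submult])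
    also have "\<dots> = \<beta> ^ n * (b j / \<beta> ^ j)"
      using \<beta>_pos by (simp add: n_eq power_add power_mult \<beta>_power[symmetric] mult.commute[of q])
    also have "\<dots> \<le> \<beta> ^ n * K" using K_ge[OF \<open>j < m\<close>] \<beta>_pos by (intro mult_left_mono) auto
    finally show ?thesis .
  qed
  ultimately show ?thesis unfolding \<beta>_def by blast
qed

lemma submultiplicative_root_eventually_less:
  fixes b :: "nat \<Rightarrow> real"
  assumes nonneg: "\<And>n. 0 \<le> b n" and submult: "\<And>m n. b (m + n) \<le> b m * b n"
    and "0 < r"
  shows "\<forall>\<^sub>F n in sequentially.
           b (Suc n) powr (1 / real (Suc n)) < b (Suc k) powr (1 / real (Suc k)) + r"
proof (cases "b (Suc k) = 0")
  case True
  have "b (Suc n) = 0" if "k \<le> n" for n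
  proof -
    have "b (Suc n) = b (Suc k + (n - k))" using that by simp
    also have "\<dots> \<le> b (Suc k) * b (n - k)" by (rule submult)
    finally show ?thesis using True nonneg[of "Suc n"] by simp
  qed
  then show ?thesis
    using True \<open>0 < r\<close> by (auto simp: eventually_sequentially intro!: exI[of _ k])
next
  case False
  define \<beta> where "\<beta> = b (Suc k) powr (1 / real (Suc k))"
  have "0 < \<beta>" using False nonneg[of "Suc k"] by (simp add: \<beta>_def)
  obtain K where "0 < K" and K: "\<And>n. b n \<le> \<beta> ^ n * K"
    using submultiplicative_le_root_power[where b = b, OF nonneg submult, of "Suc k"]
      False nonneg[of "Suc k"]
    unfolding \<beta>_def by (metis less_eq_real_def zero_less_Suc)
  have "b (Suc n) powr (1 / real (Suc n)) \<le> \<beta> * K powr (1 / real (Suc n))" for n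
  proof -
    have "b (Suc n) powr (1 / real (Suc n)) \<le> (\<beta> ^ Suc n * K) powr (1 / real (Suc n))"
      using K[of "Suc n"] nonneg[of "Suc n"] by (intro powr_mono2) auto
    also have "\<dots> = (\<beta> ^ Suc n) powr (1 / real (Suc n)) * K powr (1 / real (Suc n))"
      by (rule powr_mult)
    also have "\<dots> = \<beta> * K powr (1 / real (Suc n))"
      using \<open>0 < \<beta>\<close> by (subst root_power_powr) auto
    finally show ?thesis .
  qed
  moreover have "(\<lambda>n. \<beta> * K powr (1 / real (Suc n))) \<longlonglongrightarrow> \<beta> * K powr 0"
    using \<open>0 < K\<close> by (intro tendsto_intros LIMSEQ_Suc[OF lim_const_over_n]) auto
  then have "\<forall>\<^sub>F n in sequentially. \<beta> * K powr (1 / real (Suc n)) < \<beta> + r"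
    using \<open>0 < K\<close> \<open>0 < r\<close> by (intro order_tendstoD(2)) auto
  ultimately show ?thesis
    unfolding \<beta>_def[symmetric] by (elim eventually_mono) (metis le_less_trans)
qed

lemma submultiplicative_root_convergent:
  fixes b :: "nat \<Rightarrow> real"
  assumes nonneg: "\<And>n. 0 \<le> b n" and submult: "\<And>m n. b (m + n) \<le> b m * b n"
  shows "convergent (\<lambda>n. b (Suc n) powr (1 / real (Suc n)))"
proof -
  define s where "s n = b (Suc n) powr (1 / real (Suc n))" for n
  have bdd: "bdd_below (range s)" by (rule bdd_belowI[of _ 0]) (auto simp: s_def)
  have "s \<longlonglongrightarrow> Inf (range s)"
  proof (rule order_tendstoI)
    fix a assume "a < Inf (range s)"
    moreover have "Inf (range s) \<le> s n" for n by (rule cInf_lower[OF _ bdd]) simp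
    ultimately show "\<forall>\<^sub>F n in sequentially. a < s n"
      by (auto intro: always_eventually less_le_trans)
  next
    fix a assume "Inf (range s) < a"
    then obtain k where "s k < a" using cInf_lessD[of "range s"] by blast
    then show "\<forall>\<^sub>F n in sequentially. s n < a"
      using submultiplicative_root_eventually_less[where b = b, OF nonneg submult, of "a - s k" k]
      unfolding s_def by auto
  qed
  then show ?thesis unfolding s_def convergent_def by blast
qed

section \<open>Spectral norm and joint spectral radius\<close>

lemma opnorm2_bound: "norm (A *v x) \<le> opnorm2 A * norm x"
  unfolding opnorm2_def by (rule onorm[OF matrix_vector_mul_bounded_linear])

lemma opnorm2_nonneg: "0 \<le> opnorm2 A"
  unfolding opnorm2_def by (rule onorm_pos_le[OF matrix_vector_mul_bounded_linear])

lemma opnorm2_le: "(\<And>x. norm (A *v x) \<le> b * norm x) \<Longrightarrow> opnorm2 A \<le> b"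
  unfolding opnorm2_def by (rule onorm_le)

lemma opnorm2_mat_1: "opnorm2 (mat 1 :: real^'n::finite^'n) = 1"
proof -
  have "(*v) (mat 1 :: real^'n^'n) = (\<lambda>x. x)" by (rule ext) simp
  then show ?thesis unfolding opnorm2_def by (simp add: onorm_id)
qed

lemma opnorm2_mult: "opnorm2 (A ** B) \<le> opnorm2 A * opnorm2 B"
proof (rule opnorm2_le)
  fix x
  have "norm ((A ** B) *v x) = norm (A *v (B *v x))" by (simp add: matrix_vector_mul_assoc)
  also have "\<dots> \<le> opnorm2 A * norm (B *v x)" by (rule opnorm2_bound)
  also have "\<dots> \<le> opnorm2 A * (opnorm2 B * norm x)"
    by (rule mult_left_mono[OF opnorm2_bound opnorm2_nonneg])
  finally show "norm ((A ** B) *v x) \<le> opnorm2 A * opnorm2 B * norm x" by (simp add: mult.assoc)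
qed

lemma opnorm2_add_scaled_mat_1:
  assumes "0 \<le> \<eta>"
  shows "opnorm2 (M + \<eta> *\<^sub>R mat 1) \<le> opnorm2 M + \<eta>"
proof (rule opnorm2_le)
  fix x
  have "(M + \<eta> *\<^sub>R mat 1) *v x = M *v x + \<eta> *\<^sub>R x"
    by (simp add: matrix_vector_mult_add_rdistrib scaleR_matrix_vector_assoc[symmetric])
  then have "norm ((M + \<eta> *\<^sub>R mat 1) *v x) \<le> norm (M *v x) + norm (\<eta> *\<^sub>R x)"
    by (simp only: norm_triangle_ineq)
  also have "\<dots> \<le> (opnorm2 M + \<eta>) * norm x"
    using opnorm2_bound[of M x] assms by (simp add: algebra_simps)
  finally show "norm ((M + \<eta> *\<^sub>R mat 1) *v x) \<le> (opnorm2 M + \<eta>) * norm x" .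
qed

lemma matprod_list_append: "matprod_list A (xs @ ys) = matprod_list A xs ** matprod_list A ys"
  by (induction xs) (auto simp: matrix_mul_assoc)

lemma opnorm2_matprod_list_le:
  assumes "\<And>i. opnorm2 (A i) \<le> q"
  shows "opnorm2 (matprod_list A is) \<le> q ^ length is"
proof (induction "is")
  case (Cons i js)
  have "opnorm2 (matprod_list A (i # js)) \<le> opnorm2 (A i) * opnorm2 (matprod_list A js)"
    by (simp add: opnorm2_mult)
  also have "\<dots> \<le> q * q ^ length js"
    by (rule mult_mono[OF assms Cons order_trans[OF opnorm2_nonneg assms] opnorm2_nonneg])
  finally show ?case by simp
qed (simp add: opnorm2_mat_1)

definition max_prod_norm :: "('i::finite \<Rightarrow> real^'n::finite^'n) \<Rightarrow> nat \<Rightarrow> real" where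
  "max_prod_norm A k = Max {opnorm2 (matprod_list A is) | is. length is = k}"

lemma jsr_eq_lim_max_prod_norm:
  "jsr A = lim (\<lambda>k. max_prod_norm A (Suc k) powr (1 / real (Suc k)))"
  unfolding jsr_def max_prod_norm_def ..

lemma finite_prod_norms:
  "finite {opnorm2 (matprod_list A is) | is :: 'i::finite list. length is = k}"
proof -
  have "finite {is :: 'i list. length is = k}"
    using finite_lists_length_eq[of "UNIV :: 'i set" k] by simp
  then show ?thesis by (simp add: setcompr_eq_image)
qed

lemma opnorm2_le_max_prod_norm:
  "length is = k \<Longrightarrow> opnorm2 (matprod_list A is) \<le> max_prod_norm A k"
  unfolding max_prod_norm_def by (rule Max_ge[OF finite_prod_norms]) auto

lemma max_prod_norm_nonneg: "0 \<le> max_prod_norm A k"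
  using order_trans[OF opnorm2_nonneg opnorm2_le_max_prod_norm[of "replicate k undefined" k A]]
  by simp

lemma max_prod_norm_le:
  "(\<And>is. length is = k \<Longrightarrow> opnorm2 (matprod_list A is) \<le> c) \<Longrightarrow> max_prod_norm A k \<le> c"
  unfolding max_prod_norm_def
  by (rule Max.boundedI[OF finite_prod_norms]) (auto intro!: exI[of _ "replicate k undefined"])

lemma max_prod_norm_submult: "max_prod_norm A (m + n) \<le> max_prod_norm A m * max_prod_norm A n"
proof (rule max_prod_norm_le)
  fix "is" :: "'a list" assume len: "length is = m + n"
  have "opnorm2 (matprod_list A is)
        = opnorm2 (matprod_list A (take m is) ** matprod_list A (drop m is))"
    by (metis append_take_drop_id matprod_list_append)
  also have "\<dots> \<le> opnorm2 (matprod_list A (take m is)) * opnorm2 (matprod_list A (drop m is))"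
    by (rule opnorm2_mult)
  also have "\<dots> \<le> max_prod_norm A m * max_prod_norm A n"
    using len by (intro mult_mono opnorm2_le_max_prod_norm opnorm2_nonneg max_prod_norm_nonneg) auto
  finally show "opnorm2 (matprod_list A is) \<le> max_prod_norm A m * max_prod_norm A n" .
qed

lemma jsr_le:
  assumes "\<And>i. opnorm2 (A i) \<le> q"
  shows "jsr A \<le> q"
proof -
  have "0 \<le> q" by (rule order_trans[OF opnorm2_nonneg assms])
  have "max_prod_norm A (Suc k) powr (1 / real (Suc k)) \<le> q" for k
  proof -
    have "max_prod_norm A (Suc k) \<le> q ^ Suc k"
      by (intro max_prod_norm_le) (metis opnorm2_matprod_list_le[where A = A, OF assms])
    then have "max_prod_norm A (Suc k) powr (1 / real (Suc k)) \<le> (q ^ Suc k) powr (1 / real (Suc k))"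
      by (intro powr_mono2 max_prod_norm_nonneg) auto
    also have "\<dots> = q" using \<open>0 \<le> q\<close> by (rule root_power_powr) simp
    finally show ?thesis .
  qed
  \<comment> \<open>Convergence matters: lim of a divergent sequence is an unspecified number.\<close>
  then show ?thesis
    unfolding jsr_eq_lim_max_prod_norm
    by (intro lim_le submultiplicative_root_convergent max_prod_norm_nonneg max_prod_norm_submult)
qed

section \<open>Rayleigh quotients of symmetric matrices\<close>

lemma symmetric_matrix_inner_commute:
  fixes S :: "real^'n::finite^'n"
  assumes "transpose S = S"
  shows "(S *v x) \<bullet> y = x \<bullet> (S *v y)"
  by (metis assms dot_lmul_matrix transpose_matrix_vector)

lemma psd_form_zero_imp_kernel:
  fixes T :: "real^'n::finite^'n"
  assumes sym: "transpose T = T" and psd: "\<And>x. 0 \<le> x \<bullet> (T *v x)"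
    and zero: "v \<bullet> (T *v v) = 0"
  shows "T *v v = 0"
proof -
  define u where "u = T *v v"
  define a q where "a = u \<bullet> u" and "q = u \<bullet> (T *v u)"
  have "0 \<le> q" unfolding q_def by (rule psd)
  have "(v + t *\<^sub>R u) \<bullet> (T *v (v + t *\<^sub>R u)) = 2 * t * a + t\<^sup>2 * q" for t
  proof -
    have "v \<bullet> (T *v u) = a"
      using symmetric_matrix_inner_commute[OF sym, of v u] by (simp add: a_def u_def)
    then show ?thesis
      using zero by (simp add: a_def q_def u_def inner_commute power2_eq_square algebra_simps)
  qed
  \<comment> \<open>The form is nonnegative along the line v + t u, but negative at t = -a/(q+1) unless a = 0.\<close>
  then have "0 \<le> 2 * t * a + t\<^sup>2 * q" for t by (metis psd)
  moreover have "2 * t * a + t\<^sup>2 * q = - (a\<^sup>2 * (q + 2)) / (q + 1)\<^sup>2" if "t = - a / (q + 1)" for t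
    using that \<open>0 \<le> q\<close> by (simp add: divide_simps power2_eq_square) algebra
  ultimately have "0 \<le> - (a\<^sup>2 * (q + 2)) / (q + 1)\<^sup>2" by metis
  moreover have "0 < a\<^sup>2 * (q + 2) / (q + 1)\<^sup>2" if "a \<noteq> 0"
    using that \<open>0 \<le> q\<close> by (intro divide_pos_pos mult_pos_pos) auto
  ultimately have "a = 0" by fastforce
  then show ?thesis by (simp add: a_def u_def)
qed

lemma symmetric_min_rayleigh_eigenpair:
  fixes S :: "real^'n::finite^'n"
  assumes sym: "transpose S = S"
  obtains c v where "v \<noteq> 0" "S *v v = c *\<^sub>R v" "\<And>x. c * (x \<bullet> x) \<le> x \<bullet> (S *v x)"
proof -
  \<comment> \<open>The minimum c of the Rayleigh quotient makes S - cI positive semidefinite, and its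
    minimiser v is isotropic for S - cI, hence in its kernel.\<close>
  define f where "f x = x \<bullet> (S *v x)" for x :: "real^'n"
  have "continuous_on (sphere 0 1) f"
    unfolding f_def by (intro continuous_intros linear_continuous_on bounded_linear.linear) auto
  moreover have "axis undefined 1 \<in> sphere (0::real^'n) 1" by simp
  ultimately obtain v where v: "v \<in> sphere 0 1" and v_min: "\<And>y. y \<in> sphere 0 1 \<Longrightarrow> f v \<le> f y"
    using continuous_attains_inf[OF compact_sphere] by blast
  define c where "c = f v"
  have c_le: "c * (x \<bullet> x) \<le> f x" for x
  proof (cases "x = 0")
    case False
    have "c \<le> f ((1 / norm x) *\<^sub>R x)" unfolding c_def using False by (intro v_min) simp
    also have "\<dots> = f x / (x \<bullet> x)"
      by (simp add: f_def matrix_vector_mult_scaleR power2_norm_eq_inner[symmetric] power2_eq_square)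
    finally show ?thesis using False by (simp add: pos_le_divide_eq)
  qed (simp add: f_def)
  define T where "T = S - c *\<^sub>R mat 1"
  have T_form: "x \<bullet> (T *v x) = f x - c * (x \<bullet> x)" for x
    by (simp add: T_def f_def matrix_vector_mult_diff_rdistrib scaleR_matrix_vector_assoc[symmetric]
        inner_diff_right)
  have "T *v v = 0"
  proof (rule psd_form_zero_imp_kernel)
    have "transpose T = transpose S - c *\<^sub>R mat 1"
      by (auto simp: T_def transpose_def vec_eq_iff mat_def)
    then show "transpose T = T" by (simp add: sym T_def)
    show "0 \<le> x \<bullet> (T *v x)" for x using c_le[of x] by (simp add: T_form)
    show "v \<bullet> (T *v v) = 0" using v by (simp add: T_form c_def inner_commute dot_square_norm)
  qed
  then have "S *v v = c *\<^sub>R v"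
    by (simp add: T_def matrix_vector_mult_diff_rdistrib scaleR_matrix_vector_assoc[symmetric])
  moreover have "v \<noteq> 0" using v by auto
  ultimately show ?thesis using that c_le unfolding f_def by blast
qed

lemma finite_eigenvalues_symmetric:
  fixes S :: "real^'n::finite^'n"
  assumes sym: "transpose S = S"
  shows "finite {c. \<exists>v. v \<noteq> 0 \<and> S *v v = c *\<^sub>R v}"
proof -
  define E where "E = {c. \<exists>v. v \<noteq> 0 \<and> S *v v = c *\<^sub>R v}"
  define w where "w c = (SOME v. v \<noteq> 0 \<and> S *v v = c *\<^sub>R v)" for c
  have w: "w c \<noteq> 0 \<and> S *v w c = c *\<^sub>R w c" if "c \<in> E" for c
  proof -
    from that obtain v where "v \<noteq> 0 \<and> S *v v = c *\<^sub>R v" unfolding E_def by auto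
    then show ?thesis unfolding w_def by (rule someI)
  qed
  have inj: "inj_on w E"
  proof (rule inj_onI)
    fix c c' assume "c \<in> E" "c' \<in> E" "w c = w c'"
    then have "c *\<^sub>R w c = c' *\<^sub>R w c" "w c \<noteq> 0" using w by metis+
    then show "c = c'" by simp
  qed
  have orth: "pairwise orthogonal (w ` E)"
  proof (clarsimp simp: pairwise_def orthogonal_def)
    fix c c' assume "c \<in> E" "c' \<in> E" "w c \<noteq> w c'"
    then have "c \<noteq> c'" by auto
    have "c * (w c \<bullet> w c') = (S *v w c) \<bullet> w c'" using w[OF \<open>c \<in> E\<close>] by simp
    also have "\<dots> = w c \<bullet> (S *v w c')" by (rule symmetric_matrix_inner_commute[OF sym])
    also have "\<dots> = c' * (w c \<bullet> w c')" using w[OF \<open>c' \<in> E\<close>] by simp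
    finally show "w c \<bullet> w c' = 0" using \<open>c \<noteq> c'\<close> by simp
  qed
  have "0 \<notin> w ` E" using w by auto
  then have "independent (w ` E)" using pairwise_orthogonal_independent orth by blast
  then have "finite (w ` E)" by (rule independent_imp_finite)
  then show ?thesis using finite_imageD inj unfolding E_def by blast
qed

lemma lambda_min_le_rayleigh:
  fixes S :: "real^'n::finite^'n"
  assumes sym: "transpose S = S"
  shows "lambda_min S * (x \<bullet> x) \<le> x \<bullet> (S *v x)"
proof -
  obtain c v where "v \<noteq> 0" "S *v v = c *\<^sub>R v" and c_le: "\<And>x. c * (x \<bullet> x) \<le> x \<bullet> (S *v x)"
    using symmetric_min_rayleigh_eigenpair[OF sym] by blast
  have "lambda_min S = c"
    unfolding lambda_min_def
  proof (rule Min_eqI[OF finite_eigenvalues_symmetric[OF sym]])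
    fix c' assume "c' \<in> {c. \<exists>v. v \<noteq> 0 \<and> S *v v = c *\<^sub>R v}"
    then obtain w where "w \<noteq> 0" "S *v w = c' *\<^sub>R w" by auto
    then show "c \<le> c'" using c_le[of w] by (simp add: mult_le_cancel_right)
  next
    show "c \<in> {c. \<exists>v. v \<noteq> 0 \<and> S *v v = c *\<^sub>R v}"
      using \<open>v \<noteq> 0\<close> \<open>S *v v = c *\<^sub>R v\<close> by blast
  qed
  then show ?thesis using c_le by simp
qed

lemma transpose_symmetric_part:
  fixes M :: "real^'n::finite^'n"
  shows "transpose ((1/2) *\<^sub>R (M + transpose M)) = (1/2) *\<^sub>R (M + transpose M)"
  by (simp add: transpose_def vec_eq_iff)

lemma inner_symmetric_part:
  fixes M :: "real^'n::finite^'n"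
  shows "x \<bullet> (((1/2) *\<^sub>R (M + transpose M)) *v x) = x \<bullet> (M *v x)"
proof -
  have "x \<bullet> (transpose M *v x) = x \<bullet> (M *v x)"
    using dot_lmul_matrix[of x M x] by (simp add: inner_commute)
  then show ?thesis
    by (simp add: matrix_vector_mult_add_rdistrib scaleR_matrix_vector_assoc[symmetric] inner_add_right)
qed

section \<open>The contraction bound\<close>

lemma opnorm2_id_minus_scaled_le:
  fixes B :: "real^'n::finite^'n"
  assumes "0 \<le> \<alpha>" and coercive: "\<And>x. c * (x \<bullet> x) \<le> x \<bullet> (B *v x)"
    and bounded: "opnorm2 B \<le> L"
  shows "opnorm2 (mat 1 - \<alpha> *\<^sub>R B) \<le> sqrt (1 - 2 * \<alpha> * c + \<alpha>\<^sup>2 * L\<^sup>2)"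
proof (rule opnorm2_le)
  fix x :: "real^'n"
  have "norm (B *v x) \<le> L * norm x"
    using opnorm2_bound[of B x] bounded by (meson mult_right_mono norm_ge_zero order_trans)
  then have B_sq: "(norm (B *v x))\<^sup>2 \<le> (L * norm x)\<^sup>2" by (intro power_mono) auto
  have image: "(mat 1 - \<alpha> *\<^sub>R B) *v x = x - \<alpha> *\<^sub>R (B *v x)"
    by (simp add: matrix_vector_mult_diff_rdistrib scaleR_matrix_vector_assoc[symmetric])
  have "(norm ((mat 1 - \<alpha> *\<^sub>R B) *v x))\<^sup>2
        = x \<bullet> x - 2 * \<alpha> * (x \<bullet> (B *v x)) + \<alpha>\<^sup>2 * (norm (B *v x))\<^sup>2"
    unfolding image power2_norm_eq_inner
    by (simp add: inner_diff_left inner_diff_right inner_commute power2_eq_square algebra_simps)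
  also have "\<dots> \<le> x \<bullet> x - 2 * \<alpha> * (c * (x \<bullet> x)) + \<alpha>\<^sup>2 * (L * norm x)\<^sup>2"
    using coercive[of x] B_sq \<open>0 \<le> \<alpha>\<close> by (intro add_mono diff_mono mult_left_mono) auto
  also have "\<dots> = (1 - 2 * \<alpha> * c + \<alpha>\<^sup>2 * L\<^sup>2) * (norm x)\<^sup>2"
    by (simp add: power2_norm_eq_inner power_mult_distrib algebra_simps)
  finally have "norm ((mat 1 - \<alpha> *\<^sub>R B) *v x) \<le> sqrt ((1 - 2 * \<alpha> * c + \<alpha>\<^sup>2 * L\<^sup>2) * (norm x)\<^sup>2)"
    by (rule real_le_rsqrt)
  then show "norm ((mat 1 - \<alpha> *\<^sub>R B) *v x) \<le> sqrt (1 - 2 * \<alpha> * c + \<alpha>\<^sup>2 * L\<^sup>2) * norm x"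
    by (simp add: real_sqrt_mult)
qed

lemma contraction_radicand_less_1:
  fixes \<alpha> k L :: real
  assumes "0 < \<alpha>" and "\<alpha> < 2 * k / L\<^sup>2"
  shows "1 - 2 * \<alpha> * k + \<alpha>\<^sup>2 * L\<^sup>2 < 1"
proof -
  have "L \<noteq> 0" using assms by auto
  then have "\<alpha> * L\<^sup>2 < 2 * k" using assms(2) by (simp add: less_divide_eq)
  then have "\<alpha> * (\<alpha> * L\<^sup>2) < \<alpha> * (2 * k)" using \<open>0 < \<alpha>\<close> by simp
  then show ?thesis by (simp add: power2_eq_square algebra_simps)
qed

lemma c_Phi_le_inner_M_mat: "c_Phi \<gamma> P d \<Phi> * (x \<bullet> x) \<le> x \<bullet> (M_mat \<gamma> P d \<Phi> \<pi> *v x)"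
proof -
  let ?M = "M_mat \<gamma> P d \<Phi> \<pi>"
  have "c_Phi \<gamma> P d \<Phi> \<le> lambda_min ((1/2) *\<^sub>R (?M + transpose ?M))"
    unfolding c_Phi_def by (rule Min_le) auto
  then have "c_Phi \<gamma> P d \<Phi> * (x \<bullet> x) \<le> lambda_min ((1/2) *\<^sub>R (?M + transpose ?M)) * (x \<bullet> x)"
    by (intro mult_right_mono) auto
  also have "\<dots> \<le> x \<bullet> (?M *v x)"
    using lambda_min_le_rayleigh[OF transpose_symmetric_part] by (simp only: inner_symmetric_part)
  finally show ?thesis .
qed

lemma opnorm2_le_L_Phi_eta: "opnorm2 (M_mat \<gamma> P d \<Phi> \<pi> + \<eta> *\<^sub>R mat 1) \<le> L_Phi_eta \<gamma> P d \<Phi> \<eta>"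
  unfolding L_Phi_eta_def by (rule Max_ge) auto

lemma L_Phi_eta_nonneg: "0 \<le> L_Phi_eta \<gamma> P d \<Phi> \<eta>"
  using opnorm2_nonneg opnorm2_le_L_Phi_eta by (rule order_trans)

lemma L_Phi_eta_le:
  assumes "0 \<le> \<eta>"
  shows "L_Phi_eta \<gamma> P d \<Phi> \<eta> \<le> L_Phi \<gamma> P d \<Phi> + \<eta>"
proof -
  have "opnorm2 (M_mat \<gamma> P d \<Phi> \<pi> + \<eta> *\<^sub>R mat 1) \<le> L_Phi \<gamma> P d \<Phi> + \<eta>" for \<pi>
  proof -
    have "opnorm2 (M_mat \<gamma> P d \<Phi> \<pi>) \<le> L_Phi \<gamma> P d \<Phi>"
      unfolding L_Phi_def by (rule Max_ge) auto
    then show ?thesis using opnorm2_add_scaled_mat_1[OF assms, of "M_mat \<gamma> P d \<Phi> \<pi>"] by linarith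
  qed
  then show ?thesis unfolding L_Phi_eta_def by (auto intro: Max.boundedI)
qed

lemma jsr_A_mat_le:
  assumes "0 \<le> \<alpha>"
  shows "jsr (A_mat \<gamma> P d \<Phi> \<alpha> \<eta>)
           \<le> sqrt (1 - 2 * \<alpha> * (c_Phi \<gamma> P d \<Phi> + \<eta>) + \<alpha>\<^sup>2 * (L_Phi_eta \<gamma> P d \<Phi> \<eta>)\<^sup>2)"
proof (rule jsr_le)
  fix \<pi>
  have "(c_Phi \<gamma> P d \<Phi> + \<eta>) * (x \<bullet> x) \<le> x \<bullet> ((M_mat \<gamma> P d \<Phi> \<pi> + \<eta> *\<^sub>R mat 1) *v x)" for x
    using c_Phi_le_inner_M_mat[of \<gamma> P d \<Phi> x \<pi>]
    by (simp add: matrix_vector_mult_add_rdistrib scaleR_matrix_vector_assoc[symmetric]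
        inner_add_right algebra_simps)
  then show "opnorm2 (A_mat \<gamma> P d \<Phi> \<alpha> \<eta> \<pi>)
      \<le> sqrt (1 - 2 * \<alpha> * (c_Phi \<gamma> P d \<Phi> + \<eta>) + \<alpha>\<^sup>2 * (L_Phi_eta \<gamma> P d \<Phi> \<eta>)\<^sup>2)"
    unfolding A_mat_def by (rule opnorm2_id_minus_scaled_le[OF assms _ opnorm2_le_L_Phi_eta])
qed

theorem corollary1:
  fixes \<gamma> \<alpha> \<eta> :: real
    and P :: "real^'s::finite^('s \<times> 'a::finite)"
    and d :: "real^('s \<times> 'a)"
    and \<Phi> :: "real^'m::finite^('s \<times> 'a)"
  assumes gamma: "0 < \<gamma>" "\<gamma> < 1"
    and P_nonneg: "\<forall>sa s'. 0 \<le> P $ sa $ s'"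
    and P_rows: "\<forall>sa. (\<Sum>s'\<in>UNIV. P $ sa $ s') = 1"
    and Phi_rank: "rank \<Phi> = CARD('m)"
    and d_pos: "\<forall>sa. 0 < d $ sa"
    and d_sum: "(\<Sum>sa\<in>UNIV. d $ sa) = 1"
    and alpha: "0 < \<alpha>" "\<alpha> < 1"
    and eta: "0 \<le> \<eta>"
  shows "jsr (A_mat \<gamma> P d \<Phi> \<alpha> \<eta>)
           \<le> sqrt (1 - 2 * \<alpha> * (c_Phi \<gamma> P d \<Phi> + \<eta>) + \<alpha>\<^sup>2 * (L_Phi_eta \<gamma> P d \<Phi> \<eta>)\<^sup>2)
    \<and> L_Phi_eta \<gamma> P d \<Phi> \<eta> \<le> L_Phi \<gamma> P d \<Phi> + \<eta>
    \<and> jsr (A_mat \<gamma> P d \<Phi> \<alpha> \<eta>)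
           \<le> sqrt (1 - 2 * \<alpha> * (c_Phi \<gamma> P d \<Phi> + \<eta>) + \<alpha>\<^sup>2 * (L_Phi \<gamma> P d \<Phi> + \<eta>)\<^sup>2)
    \<and> (c_Phi \<gamma> P d \<Phi> + \<eta> > 0 \<and> \<alpha> < 2 * (c_Phi \<gamma> P d \<Phi> + \<eta>) / (L_Phi_eta \<gamma> P d \<Phi> \<eta>)\<^sup>2
         \<longrightarrow> jsr (A_mat \<gamma> P d \<Phi> \<alpha> \<eta>) < 1)
    \<and> (c_Phi \<gamma> P d \<Phi> + \<eta> > 0 \<and> \<alpha> < 2 * (c_Phi \<gamma> P d \<Phi> + \<eta>) / (L_Phi \<gamma> P d \<Phi> + \<eta>)\<^sup>2
         \<longrightarrow> jsr (A_mat \<gamma> P d \<Phi> \<alpha> \<eta>) < 1)"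
proof -
  let ?c = "c_Phi \<gamma> P d \<Phi> + \<eta>" and ?L = "L_Phi \<gamma> P d \<Phi> + \<eta>"
  let ?Le = "L_Phi_eta \<gamma> P d \<Phi> \<eta>" and ?\<rho> = "jsr (A_mat \<gamma> P d \<Phi> \<alpha> \<eta>)"
  have jsr_Le: "?\<rho> \<le> sqrt (1 - 2 * \<alpha> * ?c + \<alpha>\<^sup>2 * ?Le\<^sup>2)"
    using alpha(1) by (intro jsr_A_mat_le) simp
  have Le_L: "?Le \<le> ?L" using eta by (rule L_Phi_eta_le)
  then have "?Le\<^sup>2 \<le> ?L\<^sup>2" using L_Phi_eta_nonneg by (intro power_mono)
  then have "1 - 2 * \<alpha> * ?c + \<alpha>\<^sup>2 * ?Le\<^sup>2 \<le> 1 - 2 * \<alpha> * ?c + \<alpha>\<^sup>2 * ?L\<^sup>2"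
    by (simp add: mult_left_mono)
  then have jsr_L: "?\<rho> \<le> sqrt (1 - 2 * \<alpha> * ?c + \<alpha>\<^sup>2 * ?L\<^sup>2)"
    using jsr_Le real_sqrt_le_mono order_trans by blast
  have "?\<rho> < 1" if "\<alpha> < 2 * ?c / ?Le\<^sup>2"
    using jsr_Le contraction_radicand_less_1[OF alpha(1) that]
    by (meson le_less_trans real_sqrt_lt_1_iff)
  moreover have "?\<rho> < 1" if "\<alpha> < 2 * ?c / ?L\<^sup>2"
    using jsr_L contraction_radicand_less_1[OF alpha(1) that]
    by (meson le_less_trans real_sqrt_lt_1_iff)
  ultimately show ?thesis using jsr_Le Le_L jsr_L by blast
qed

end
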